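(* Assume $\theta_i<1$ for all $i$ and $\theta_j>0$ for some $j$. Then the map $F:\Delta_n\to\Delta_n$, $F(x)=(I_n-\Theta)(I_n-W(x)^T\Theta)^{-1}\mathbf 1_n/n$, satisfies: (i) $F$ is differentiable on $\operatorname{int}\Delta_n$ and continuous on $\Delta_n$; (ii) its Jacobian is $\dfrac{\partial F}{\partial x}=(I_n-\Theta)(I_n-W(x)^T\Theta)^{-1}(I_n-C^T)\Theta(I_n-\Theta)^{-1}\mathrm{diag}(F(x))$; (iii) for every $x\in\Delta_n$ and every $i$, $\dfrac{1-\theta_i}{n}\le F_i(x)\le \dfrac{1+\zeta}{n}$, where $\zeta=n\theta_{\mathrm{ave}}-\theta_{\min}$.
   Context: Let $n\ge 2$, $\mathbf 1_n$ the all-ones vector, $I_n$ the identity matrix, $\Delta_n=\{x\in\mathbb R^n: x\ge 0,\ \mathbf 1_n^Tx=1\}$, $\operatorname{int}\Delta_n=\{x\in\mathbb R^n: x>0,\ \mathbf 1_n^Tx=1\}$. Let $C\in\mathbb R^{n\times n}$ be a nonnegative row-stochastic matrix with zero diagonal, $\theta\in[0,1]^n$, $\Theta=\mathrm{diag}(\theta)$, and for $x\in\mathbb R^n$, $W(x)=\mathrm{diag}(x)+(I_n-\mathrm{diag}(x))C$. Under the stated assumption on $\theta$, $I_n-W(x)^T\Theta$ is invertible for every $x\in\Delta_n$. Let $\theta_{\min}=\min_j\theta_j$ and $\theta_{\mathrm{ave}}=\frac1n\sum_{j=1}^n\theta_j$. *)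

theory Defs
  imports "HOL-Analysis.Analysis"
begin

text \<open>Vectors in R^n are modelled as real^'n, n = CARD('n); matrices as real^'n^'n.\<close>

definition ones :: "real^'n" where
  "ones = (\<chi> i. 1)"

definition diagm :: "real^'n \<Rightarrow> real^'n^'n" where
  "diagm x = (\<chi> i j. if i = j then x $ i else 0)"

definition Delta :: "(real^'n) set" where
  "Delta = {x. (\<forall>i. 0 \<le> x $ i) \<and> (\<Sum>i\<in>UNIV. x $ i) = 1}"

definition int_Delta :: "(real^'n) set" where
  "int_Delta = {x. (\<forall>i. 0 < x $ i) \<and> (\<Sum>i\<in>UNIV. x $ i) = 1}"

definition row_stochastic :: "real^'n^'n \<Rightarrow> bool" where
  "row_stochastic C \<longleftrightarrow> (\<forall>i j. 0 \<le> C $ i $ j) \<and> (\<forall>i. (\<Sum>j\<in>UNIV. C $ i $ j) = 1)"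

definition Wm :: "real^'n^'n \<Rightarrow> real^'n \<Rightarrow> real^'n^'n" where
  "Wm C x = diagm x + (mat 1 - diagm x) ** C"

definition Fmap :: "real^'n^'n \<Rightarrow> real^'n \<Rightarrow> real^'n \<Rightarrow> real^'n" where
  "Fmap C \<theta> x = ((mat 1 - diagm \<theta>) ** matrix_inv (mat 1 - transpose (Wm C x) ** diagm \<theta>))
                  *v ((1 / real CARD('n)) *\<^sub>R ones)"

definition Jac :: "real^'n^'n \<Rightarrow> real^'n \<Rightarrow> real^'n \<Rightarrow> real^'n^'n" where
  "Jac C \<theta> x = (mat 1 - diagm \<theta>) ** matrix_inv (mat 1 - transpose (Wm C x) ** diagm \<theta>)
                 ** (mat 1 - transpose C) ** diagm \<theta> ** matrix_inv (mat 1 - diagm \<theta>)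
                 ** diagm (Fmap C \<theta> x)"

definition theta_min :: "real^'n \<Rightarrow> real" where
  "theta_min \<theta> = Min (range (\<lambda>j. \<theta> $ j))"

definition theta_ave :: "real^'n \<Rightarrow> real" where
  "theta_ave \<theta> = (\<Sum>j\<in>UNIV. \<theta> $ j) / real CARD('n)"

end

theory Submission
  imports Defs
begin

text \<open>
  Write F(x) = (I - Theta) y(x), where y(x) solves M(x) y = 1/n with M(x) = I - W(x)^T Theta.
  For x in the unit cube W(x) is row-stochastic, so summing the components of M(x) u gives
  sum_i (1 - theta_i) |u_i| <= |M(x) u|_1. This bounds M(x)^-1 uniformly, and the same
  summation applied to the negative part of u shows that M(x) u >= 0 forces u >= 0. Hence
  y >= 1/n, which is the lower bound; summing M(x) y = 1/n gives sum_i F_i = 1, and the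
  lower bounds on the other components then give the upper bound. Since M(x) is affine in x,
  the uniform bound on M(x)^-1 makes y differentiable with derivative
  h |-> M(x)^-1 (I - C^T) Theta diag(y) h, which is the stated Jacobian because
  Theta diag(y) = Theta (I - Theta)^-1 diag(F).
\<close>

lemma matrix_inv_right:
  fixes A :: "'a::field^'n^'n"
  assumes "invertible A"
  shows "A ** matrix_inv A = mat 1"
  using someI_ex[OF assms[unfolded invertible_def]] by (simp add: matrix_inv_def)

lemma matrix_vector_mult_matrix_inv:
  fixes A :: "'a::field^'n^'n"
  assumes "invertible A"
  shows "A *v (matrix_inv A *v b) = b"
  by (simp add: matrix_vector_mul_assoc matrix_inv_right[OF assms])

lemma matrix_inv_eqI:
  fixes A B :: "'a::field^'n^'n"
  assumes "B ** A = mat 1"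
  shows "matrix_inv A = B"
proof -
  have inv: "invertible A"
    using assms invertible_left_inverse by blast
  show ?thesis
    by (metis assms inv matrix_inv_right matrix_mul_assoc matrix_mul_lid matrix_mul_rid)
qed

lemma invertible_if_norm_bound:
  fixes A :: "real^'n^'n"
  assumes "\<And>u. norm u \<le> K * norm (A *v u)"
  shows "invertible A"
proof -
  have "A *v u = 0 \<Longrightarrow> u = 0" for u
    using assms[of u] by simp
  then show ?thesis
    using invertible_left_inverse matrix_left_invertible_ker by blast
qed

lemma matrix_vector_mult_uminus: "A *v (- x) = - (A *v (x :: 'a::ring_1^'n))"
  by (simp add: vec_eq_iff matrix_vector_mult_def sum_negf)

lemma diagm_mult_vector: "diagm t *v u = t * u"
  by (simp add: diagm_def vec_eq_iff matrix_vector_mult_def if_distrib[of "\<lambda>a. a * _"]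
      cong: if_cong)

lemma diagm_mult_diagm: "diagm a ** diagm b = diagm (a * b)"
  by (simp add: matrix_eq diagm_mult_vector mult.assoc flip: matrix_vector_mul_assoc)

lemma diagm_one: "diagm 1 = mat 1"
  by (simp add: diagm_def vec_eq_iff mat_def)

lemma mat_1_minus_diagm: "mat 1 - diagm t = diagm (1 - t)"
  by (simp add: diagm_def vec_eq_iff mat_def)

lemma diagm_matrix_mult_component: "(diagm d ** A) $ i $ j = d $ i * A $ i $ j"
  by (simp add: diagm_def matrix_matrix_mult_def if_distrib[of "\<lambda>a. a * _"] cong: if_cong)

lemma matrix_mult_diagm_component: "(A ** diagm d) $ i $ j = A $ i $ j * d $ j"
  by (simp add: diagm_def matrix_matrix_mult_def if_distrib[of "\<lambda>a. _ * a"] cong: if_cong)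

lemma matrix_inv_diagm:
  fixes d :: "real^'n"
  assumes "\<And>i. d $ i \<noteq> 0"
  shows "matrix_inv (diagm d) = diagm (\<chi> i. 1 / d $ i)"
proof (rule matrix_inv_eqI)
  have "(\<chi> i. 1 / d $ i) * d = 1"
    using assms by (simp add: vec_eq_iff)
  then show "diagm (\<chi> i. 1 / d $ i) ** diagm d = mat 1"
    by (simp add: diagm_mult_diagm diagm_one)
qed

lemma vector_matrix_mult_component: "(v v* W) $ j = (\<Sum>i\<in>UNIV. v $ i * W $ i $ j)"
  by (simp add: vector_matrix_mult_def)

lemma vector_matrix_mult_mono:
  fixes W :: "real^'n^'m"
  assumes "\<And>i j. 0 \<le> W $ i $ j" and "\<And>i. a $ i \<le> b $ i"
  shows "(a v* W) $ j \<le> (b v* W) $ j"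
  unfolding vector_matrix_mult_component using assms by (intro sum_mono mult_right_mono) auto

lemma abs_vector_matrix_mult_le:
  fixes W :: "real^'n^'m"
  assumes "\<And>i j. 0 \<le> W $ i $ j"
  shows "\<bar>(v v* W) $ j\<bar> \<le> ((\<chi> i. \<bar>v $ i\<bar>) v* W) $ j"
  unfolding vector_matrix_mult_component
  using sum_abs[of "\<lambda>i. v $ i * W $ i $ j" UNIV] assms by (simp add: abs_mult)

lemma sum_vector_matrix_mult_stochastic:
  assumes "row_stochastic W"
  shows "(\<Sum>j\<in>UNIV. (v v* W) $ j) = (\<Sum>i\<in>UNIV. v $ i)"
proof -
  have "(\<Sum>j\<in>UNIV. (v v* W) $ j) = (\<Sum>i\<in>UNIV. \<Sum>j\<in>UNIV. v $ i * W $ i $ j)"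
    unfolding vector_matrix_mult_component by (rule sum.swap)
  also have "\<dots> = (\<Sum>i\<in>UNIV. v $ i * (\<Sum>j\<in>UNIV. W $ i $ j))"
    by (simp add: sum_distrib_left)
  finally show ?thesis
    using assms by (simp add: row_stochastic_def)
qed

lemma stochastic_system_mult_vector:
  "(mat 1 - transpose W ** diagm \<theta>) *v u = u - (\<theta> * u) v* W"
  by (simp add: matrix_vector_mult_diff_rdistrib diagm_mult_vector flip: matrix_vector_mul_assoc)

lemma sum_stochastic_system:
  assumes "row_stochastic W"
  shows "(\<Sum>j\<in>UNIV. ((mat 1 - transpose W ** diagm \<theta>) *v u) $ j)
           = (\<Sum>i\<in>UNIV. (1 - \<theta> $ i) * u $ i)"
  using sum_vector_matrix_mult_stochastic[OF assms, of "\<theta> * u"]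
  by (simp add: stochastic_system_mult_vector sum_subtractf left_diff_distrib)

lemma weighted_l1_le_stochastic_system:
  assumes W: "row_stochastic W" and \<theta>: "\<And>i. 0 \<le> \<theta> $ i"
  shows "(\<Sum>i\<in>UNIV. (1 - \<theta> $ i) * \<bar>u $ i\<bar>)
           \<le> (\<Sum>j\<in>UNIV. \<bar>((mat 1 - transpose W ** diagm \<theta>) *v u) $ j\<bar>)"
proof -
  let ?r = "(mat 1 - transpose W ** diagm \<theta>) *v u"
  let ?a = "\<chi> i. \<theta> $ i * \<bar>u $ i\<bar>"
  have W_nonneg: "0 \<le> W $ i $ j" for i j
    using W by (simp add: row_stochastic_def)
  have u_le: "\<bar>u $ j\<bar> \<le> \<bar>?r $ j\<bar> + (?a v* W) $ j" for j
  proof -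
    have "u $ j = ?r $ j + ((\<theta> * u) v* W) $ j"
      by (simp add: stochastic_system_mult_vector)
    moreover have "\<bar>((\<theta> * u) v* W) $ j\<bar> \<le> (?a v* W) $ j"
      using abs_vector_matrix_mult_le[OF W_nonneg, of "\<theta> * u" j] \<theta> by (simp add: abs_mult)
    ultimately show ?thesis by linarith
  qed
  have "(\<Sum>j\<in>UNIV. \<bar>u $ j\<bar>) \<le> (\<Sum>j\<in>UNIV. \<bar>?r $ j\<bar> + (?a v* W) $ j)"
    using u_le by (rule sum_mono)
  also have "\<dots> = (\<Sum>j\<in>UNIV. \<bar>?r $ j\<bar>) + (\<Sum>i\<in>UNIV. \<theta> $ i * \<bar>u $ i\<bar>)"
    by (simp add: sum.distrib sum_vector_matrix_mult_stochastic[OF W])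
  finally show ?thesis
    by (simp add: left_diff_distrib sum_subtractf)
qed

lemma norm_le_stochastic_system:
  fixes W :: "real^'n^'n"
  assumes W: "row_stochastic W" and \<theta>: "\<And>i. 0 \<le> \<theta> $ i"
    and \<delta>: "0 < \<delta>" "\<And>i. \<delta> \<le> 1 - \<theta> $ i"
  shows "norm u \<le> real CARD('n) / \<delta> * norm ((mat 1 - transpose W ** diagm \<theta>) *v u)"
proof -
  let ?r = "(mat 1 - transpose W ** diagm \<theta>) *v u"
  have "\<delta> * (\<Sum>i\<in>UNIV. \<bar>u $ i\<bar>) \<le> (\<Sum>i\<in>UNIV. (1 - \<theta> $ i) * \<bar>u $ i\<bar>)"
    unfolding sum_distrib_left using \<delta> by (intro sum_mono mult_right_mono) auto
  also have "\<dots> \<le> (\<Sum>j\<in>UNIV. \<bar>?r $ j\<bar>)"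
    by (rule weighted_l1_le_stochastic_system[OF W \<theta>])
  also have "\<dots> \<le> real CARD('n) * norm ?r"
    using sum_bounded_above[of "UNIV :: 'n set" "\<lambda>j. \<bar>?r $ j\<bar>" "norm ?r"]
    by (simp add: component_le_norm_cart)
  finally have "(\<Sum>i\<in>UNIV. \<bar>u $ i\<bar>) \<le> real CARD('n) / \<delta> * norm ?r"
    using \<delta> by (simp add: field_simps)
  then show ?thesis
    using norm_le_l1_cart[of u] by linarith
qed

lemma stochastic_system_inverse_nonneg:
  assumes W: "row_stochastic W" and \<theta>: "\<And>i. 0 \<le> \<theta> $ i" "\<And>i. \<theta> $ i < 1"
    and r: "\<And>j. 0 \<le> ((mat 1 - transpose W ** diagm \<theta>) *v u) $ j"
  shows "0 \<le> u $ i"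
proof (rule ccontr)
  assume neg: "\<not> 0 \<le> u $ i"
  \<comment> \<open>the negative part v of u satisfies v \<le> (\<theta> v) W; summing, the row sums of W give
    \<Sum>(1 - \<theta>) v \<le> 0, which is impossible\<close>
  define v where "v = (\<chi> i. max 0 (- u $ i))"
  have v_component: "v $ i = max 0 (- u $ i)" for i
    by (simp add: v_def)
  have W_nonneg: "0 \<le> W $ i $ j" for i j
    using W by (simp add: row_stochastic_def)
  have v_le: "v $ j \<le> ((\<theta> * v) v* W) $ j" for j
  proof -
    have "- u $ j \<le> - ((\<theta> * u) v* W) $ j"
      using r[of j] by (simp add: stochastic_system_mult_vector)
    also have "\<dots> = ((- (\<theta> * u)) v* W) $ j"
      by (simp add: vector_matrix_mult_component sum_negf)
    also have "\<dots> \<le> ((\<theta> * v) v* W) $ j"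
    proof (rule vector_matrix_mult_mono[OF W_nonneg])
      fix i
      show "(- (\<theta> * u)) $ i \<le> (\<theta> * v) $ i"
        using mult_left_mono[OF max.cobounded2[of "- u $ i" 0] \<theta>(1)[of i]] by (simp add: v_component)
    qed
    finally have "- u $ j \<le> ((\<theta> * v) v* W) $ j" .
    moreover have "0 \<le> ((\<theta> * v) v* W) $ j"
      using vector_matrix_mult_mono[OF W_nonneg, of 0 "\<theta> * v" j] \<theta>(1) by (simp add: v_component)
    ultimately show ?thesis
      by (simp add: v_component)
  qed
  have "(\<Sum>j\<in>UNIV. v $ j) \<le> (\<Sum>j\<in>UNIV. ((\<theta> * v) v* W) $ j)"
    using v_le by (rule sum_mono)
  also have "\<dots> = (\<Sum>i\<in>UNIV. \<theta> $ i * v $ i)"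
    by (simp add: sum_vector_matrix_mult_stochastic[OF W])
  finally have "(\<Sum>j\<in>UNIV. (1 - \<theta> $ j) * v $ j) \<le> 0"
    by (simp add: left_diff_distrib sum_subtractf)
  moreover have "(1 - \<theta> $ i) * v $ i \<le> (\<Sum>j\<in>UNIV. (1 - \<theta> $ j) * v $ j)"
    using \<theta>(2) by (intro member_le_sum) (auto simp: v_component less_imp_le)
  moreover have "0 < (1 - \<theta> $ i) * v $ i"
    using \<theta>(2)[of i] neg by (intro mult_pos_pos) (auto simp: v_component)
  ultimately show False by linarith
qed

lemma le_one_minus_sum_lower_bounds:
  fixes F l :: "'a \<Rightarrow> real"
  assumes "finite A" "i \<in> A" and "sum F A = 1" and "\<And>j. j \<in> A \<Longrightarrow> l j \<le> F j"
  shows "F i \<le> 1 - sum l A + l i"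
proof -
  have "sum l (A - {i}) \<le> sum F (A - {i})"
    using assms(4) by (intro sum_mono) auto
  then show ?thesis
    using assms(3) sum.remove[OF assms(1,2), of F] sum.remove[OF assms(1,2), of l] by linarith
qed

lemma has_derivative_within_quadratic_remainder:
  assumes "bounded_linear f'"
    and "\<And>y. y \<in> S \<Longrightarrow> norm (f y - f x - f' (y - x)) \<le> c * norm (y - x) ^ 2"
  shows "(f has_derivative f') (at x within S)"
  unfolding has_derivative_within_alt
proof (intro conjI allI impI assms(1))
  fix e :: real
  assume "0 < e"
  let ?c = "\<bar>c\<bar> + 1"
  have "norm (f y - f x - f' (y - x)) \<le> e * norm (y - x)" if "y \<in> S" "norm (y - x) < e / ?c" for y
  proof -
    have "norm (f y - f x - f' (y - x)) \<le> c * norm (y - x) ^ 2"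
      using that(1) by (rule assms(2))
    also have "\<dots> \<le> ?c * norm (y - x) * norm (y - x)"
      using mult_right_mono[of c ?c "norm (y - x) * norm (y - x)"]
      by (simp add: power2_eq_square mult.assoc)
    also have "\<dots> \<le> e * norm (y - x)"
      using that(2) by (intro mult_right_mono) (auto simp: field_simps add_nonneg_pos)
    finally show ?thesis .
  qed
  then show "\<exists>d>0. \<forall>y\<in>S. norm (y - x) < d \<longrightarrow> norm (f y - f x - f' (y - x)) \<le> e * norm (y - x)"
    using \<open>0 < e\<close> by (intro exI[of _ "e / ?c"]) (auto simp: add_nonneg_pos)
qed

lemma matrix_inv_affine_has_derivative:
  fixes M :: "'a::real_normed_vector \<Rightarrow> real^'n^'n" and D :: "'a \<Rightarrow> real^'n \<Rightarrow> real^'n"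
  assumes D: "bounded_bilinear D"
    and affine: "\<And>x x' u. M x' *v u = M x *v u + D (x' - x) u"
    and bound: "\<And>x u. x \<in> S \<Longrightarrow> norm u \<le> K * norm (M x *v u)"
    and x: "x \<in> S"
  shows "((\<lambda>x. matrix_inv (M x) *v b)
           has_derivative (\<lambda>h. - (matrix_inv (M x) *v D h (matrix_inv (M x) *v b))))
         (at x within S)"
proof -
  interpret D: bounded_bilinear D by fact
  obtain KD where KD: "\<And>h u. norm (D h u) \<le> norm h * norm u * KD" and "0 < KD"
    using D.pos_bounded by blast
  have "0 < norm (1 :: real^'n)"
    by (simp add: vec_eq_iff)
  then have "0 < K * norm (M x *v 1)"
    using bound[OF x, of 1] by linarith
  then have "0 < K"
    by (simp add: zero_less_mult_iff)
  define y where "y x' = matrix_inv (M x') *v b" for x'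
  define T where "T h = - (matrix_inv (M x) *v D h (y x))" for h
  have inv: "invertible (M x')" if "x' \<in> S" for x'
    using bound[OF that] by (rule invertible_if_norm_bound)
  have y: "M x' *v y x' = b" if "x' \<in> S" for x'
    unfolding y_def using inv[OF that] by (rule matrix_vector_mult_matrix_inv)
  have T: "M x *v T h = - D h (y x)" for h
    unfolding T_def using inv[OF x] by (simp add: matrix_vector_mult_uminus matrix_vector_mult_matrix_inv)
  have T_bound: "norm (T h) \<le> K * KD * norm (y x) * norm h" for h
  proof -
    have "norm (T h) \<le> K * norm (D h (y x))"
      using bound[OF x, of "T h"] by (simp add: T)
    also have "\<dots> \<le> K * (norm h * norm (y x) * KD)"
      using KD \<open>0 < K\<close> by (intro mult_left_mono) auto
    finally show ?thesis by (simp add: ac_simps)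
  qed
  have remainder: "norm (y x' - y x - T (x' - x)) \<le> (K * KD) ^ 2 * norm (y x) * norm (x' - x) ^ 2"
    if x': "x' \<in> S" for x'
  proof -
    let ?h = "x' - x"
    \<comment> \<open>the remainder solves a linear system whose right-hand side is quadratic in the increment\<close>
    have "M x' *v (y x' - y x - T ?h) = - D ?h (T ?h)"
      using affine[where x = x and x' = x' and u = "y x"] affine[where x = x and x' = x' and u = "T ?h"]
        y[OF x] y[OF x'] T[of ?h]
      by (simp add: matrix_vector_mult_diff_distrib)
    then have "norm (y x' - y x - T ?h) \<le> K * norm (D ?h (T ?h))"
      using bound[OF x', of "y x' - y x - T ?h"] by simp
    also have "\<dots> \<le> K * (norm ?h * (K * KD * norm (y x) * norm ?h) * KD)"
      using KD[of ?h "T ?h"] T_bound[of ?h] \<open>0 < K\<close> \<open>0 < KD\<close>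
      by (smt (verit) mult_left_mono mult_right_mono norm_ge_zero)
    finally show ?thesis by (simp add: power2_eq_square ac_simps)
  qed
  have "bounded_linear T"
    unfolding T_def
    by (intro bounded_linear_minus bounded_linear_compose[OF matrix_vector_mul_bounded_linear]
        D.bounded_linear_left)
  then show ?thesis
    unfolding y_def[symmetric] T_def[symmetric]
    using remainder by (rule has_derivative_within_quadratic_remainder)
qed

lemma Delta_subset_cbox: "Delta \<subseteq> cbox 0 1"
proof
  fix x :: "real^'n"
  assume x: "x \<in> Delta"
  then have "x $ i \<le> 1" for i
    using member_le_sum[of i UNIV "\<lambda>j. x $ j"] by (simp add: Delta_def)
  then show "x \<in> cbox 0 1"
    using x by (simp add: Delta_def mem_box_cart)
qed

lemma int_Delta_subset_box:
  assumes "CARD('n) \<ge> 2"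
  shows "(int_Delta :: (real^'n) set) \<subseteq> box 0 1"
proof
  fix x :: "real^'n"
  assume x: "x \<in> int_Delta"
  have "x $ i < 1" for i
  proof -
    have "card (UNIV - {i} :: 'n set) \<noteq> 0"
      using assms by (simp add: card_Diff_singleton)
    then obtain j where j: "j \<in> UNIV - {i}"
      by (metis card.empty ex_in_conv)
    have "x $ j \<le> (\<Sum>k\<in>UNIV - {i}. x $ k)"
      using x j by (intro member_le_sum) (auto simp: int_Delta_def less_imp_le)
    moreover have "0 < x $ j"
      using x by (simp add: int_Delta_def)
    moreover have "x $ i + (\<Sum>k\<in>UNIV - {i}. x $ k) = 1"
      using x sum.remove[of UNIV i "\<lambda>k. x $ k"] by (simp add: int_Delta_def)
    ultimately show ?thesis
      by linarith
  qed
  then show "x \<in> box 0 1"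
    using x by (simp add: int_Delta_def mem_box_cart)
qed

lemma Wm_component: "Wm C x $ i $ j = (if i = j then x $ i else 0) + (1 - x $ i) * C $ i $ j"
  by (simp add: Wm_def mat_1_minus_diagm diagm_matrix_mult_component) (simp add: diagm_def)

lemma transpose_Wm: "transpose (Wm C x) = transpose C + (mat 1 - transpose C) ** diagm x"
  by (simp add: vec_eq_iff transpose_def Wm_component matrix_mult_diagm_component mat_def algebra_simps)

lemma row_stochastic_Wm:
  assumes C: "row_stochastic C" and x: "x \<in> cbox 0 1"
  shows "row_stochastic (Wm C x)"
proof -
  have x_bounds: "0 \<le> x $ i" "x $ i \<le> 1" for i
    using x by (simp_all add: mem_box_cart)
  have "0 \<le> Wm C x $ i $ j" for i j
    using C x_bounds[of i] unfolding Wm_component row_stochastic_def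
    by (auto intro!: add_nonneg_nonneg mult_nonneg_nonneg)
  moreover have "(\<Sum>j\<in>UNIV. Wm C x $ i $ j) = 1" for i
    using C by (simp add: Wm_component sum.distrib row_stochastic_def flip: sum_distrib_left)
  ultimately show ?thesis
    by (simp add: row_stochastic_def)
qed

definition Mm :: "real^'n^'n \<Rightarrow> real^'n \<Rightarrow> real^'n \<Rightarrow> real^'n^'n" where
  "Mm C \<theta> x = mat 1 - transpose (Wm C x) ** diagm \<theta>"

definition uniform_vec :: "real^'n" where
  "uniform_vec = (1 / real CARD('n)) *\<^sub>R ones"

definition Ymap :: "real^'n^'n \<Rightarrow> real^'n \<Rightarrow> real^'n \<Rightarrow> real^'n" where
  "Ymap C \<theta> x = matrix_inv (Mm C \<theta> x) *v uniform_vec"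

lemma Fmap_eq_Ymap: "Fmap C \<theta> x = (mat 1 - diagm \<theta>) *v Ymap C \<theta> x"
  by (simp add: Fmap_def Ymap_def Mm_def uniform_vec_def matrix_vector_mul_assoc)

lemma Fmap_component: "Fmap C \<theta> x $ i = (1 - \<theta> $ i) * Ymap C \<theta> x $ i"
  by (simp add: Fmap_eq_Ymap mat_1_minus_diagm diagm_mult_vector)

lemma Mm_mult_vector:
  "Mm C \<theta> x *v u
     = (mat 1 - transpose C ** diagm \<theta>) *v u - ((mat 1 - transpose C) ** diagm \<theta>) *v (x * u)"
  by (simp add: Mm_def transpose_Wm algebra_simps diagm_mult_vector mult.left_commute
      flip: matrix_vector_mul_assoc)

lemma Mm_norm_bound:
  fixes C :: "real^'n^'n"
  assumes C: "row_stochastic C" and \<theta>: "\<And>i. 0 \<le> \<theta> $ i" "\<And>i. \<theta> $ i < 1"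
  obtains K where "\<And>x u. x \<in> cbox 0 1 \<Longrightarrow> norm u \<le> K * norm (Mm C \<theta> x *v u)"
proof -
  define \<delta> where "\<delta> = 1 - Max (range (\<lambda>i. \<theta> $ i))"
  have "Max (range (\<lambda>i. \<theta> $ i)) \<in> range (\<lambda>i. \<theta> $ i)"
    by (rule Max_in) auto
  then obtain k where "Max (range (\<lambda>i. \<theta> $ i)) = \<theta> $ k"
    by blast
  then have \<delta>_pos: "0 < \<delta>"
    using \<theta>(2)[of k] by (simp add: \<delta>_def)
  have \<delta>_le: "\<delta> \<le> 1 - \<theta> $ i" for i
    by (simp add: \<delta>_def)
  show thesis
  proof (rule that)
    fix x u :: "real^'n"
    assume "x \<in> cbox 0 1"
    then show "norm u \<le> real CARD('n) / \<delta> * norm (Mm C \<theta> x *v u)"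
      unfolding Mm_def
      by (rule norm_le_stochastic_system[OF row_stochastic_Wm[OF C] \<theta>(1) \<delta>_pos \<delta>_le])
  qed
qed

lemma Mm_mult_Ymap:
  assumes "row_stochastic C" "\<And>i. 0 \<le> \<theta> $ i" "\<And>i. \<theta> $ i < 1" and "x \<in> cbox 0 1"
  shows "Mm C \<theta> x *v Ymap C \<theta> x = uniform_vec"
proof -
  obtain K where K: "\<And>x u. x \<in> cbox 0 1 \<Longrightarrow> norm u \<le> K * norm (Mm C \<theta> x *v u)"
    using Mm_norm_bound[OF assms(1-3)] by blast
  have "invertible (Mm C \<theta> x)"
    using K[OF assms(4)] by (rule invertible_if_norm_bound)
  then show ?thesis
    unfolding Ymap_def by (rule matrix_vector_mult_matrix_inv)
qed

lemma Ymap_lower: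
  fixes C :: "real^'n^'n"
  assumes C: "row_stochastic C" and \<theta>: "\<And>i. 0 \<le> \<theta> $ i" "\<And>i. \<theta> $ i < 1"
    and x: "x \<in> cbox 0 1"
  shows "1 / real CARD('n) \<le> Ymap C \<theta> x $ i"
proof -
  let ?y = "Ymap C \<theta> x"
  have W: "row_stochastic (Wm C x)"
    using C x by (rule row_stochastic_Wm)
  have eq: "?y - (\<theta> * ?y) v* Wm C x = uniform_vec"
    using Mm_mult_Ymap[OF C \<theta> x] by (simp add: Mm_def stochastic_system_mult_vector)
  have "0 \<le> ?y $ j" for j
  proof (rule stochastic_system_inverse_nonneg[OF W \<theta>])
    fix k
    show "0 \<le> ((mat 1 - transpose (Wm C x) ** diagm \<theta>) *v ?y) $ k"
      using Mm_mult_Ymap[OF C \<theta> x] by (simp add: Mm_def uniform_vec_def ones_def)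
  qed
  then have "0 \<le> ((\<theta> * ?y) v* Wm C x) $ i"
    using vector_matrix_mult_mono[of "Wm C x" 0 "\<theta> * ?y"] W \<theta>(1)
    by (simp add: row_stochastic_def)
  then show ?thesis
    using arg_cong[OF eq, of "\<lambda>v. v $ i"] by (simp add: uniform_vec_def ones_def)
qed

lemma sum_Fmap:
  assumes "row_stochastic C" "\<And>i. 0 \<le> \<theta> $ i" "\<And>i. \<theta> $ i < 1" and x: "x \<in> cbox 0 1"
  shows "(\<Sum>i\<in>UNIV. Fmap C \<theta> x $ i) = 1"
proof -
  have "(\<Sum>i\<in>UNIV. Fmap C \<theta> x $ i) = (\<Sum>j\<in>UNIV. (Mm C \<theta> x *v Ymap C \<theta> x) $ j)"
    using sum_stochastic_system[OF row_stochastic_Wm[OF assms(1) x]]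
    by (simp add: Fmap_component Mm_def)
  also have "\<dots> = 1"
    by (simp add: Mm_mult_Ymap[OF assms] uniform_vec_def ones_def)
  finally show ?thesis .
qed

lemma Fmap_lower:
  fixes C :: "real^'n^'n"
  assumes "row_stochastic C" "\<And>i. 0 \<le> \<theta> $ i" "\<And>i. \<theta> $ i < 1" and "x \<in> cbox 0 1"
  shows "(1 - \<theta> $ i) / real CARD('n) \<le> Fmap C \<theta> x $ i"
  using mult_left_mono[OF Ymap_lower[OF assms], of "1 - \<theta> $ i"] assms(3)[of i]
  by (simp add: Fmap_component)

lemma Fmap_upper:
  fixes C :: "real^'n^'n"
  assumes "row_stochastic C" "\<And>i. 0 \<le> \<theta> $ i" "\<And>i. \<theta> $ i < 1" and "x \<in> cbox 0 1"
  shows "Fmap C \<theta> x $ i \<le> (1 + (real CARD('n) * theta_ave \<theta> - theta_min \<theta>)) / real CARD('n)"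
proof -
  let ?n = "real CARD('n)"
  have "Fmap C \<theta> x $ i \<le> 1 - (\<Sum>j\<in>UNIV. (1 - \<theta> $ j) / ?n) + (1 - \<theta> $ i) / ?n"
    by (rule le_one_minus_sum_lower_bounds[where F = "\<lambda>j. Fmap C \<theta> x $ j",
          OF finite UNIV_I sum_Fmap[OF assms] Fmap_lower[OF assms]])
  also have "\<dots> = (1 + ?n * theta_ave \<theta> - \<theta> $ i) / ?n"
    by (simp add: theta_ave_def sum_subtractf field_simps flip: sum_divide_distrib)
  also have "\<dots> \<le> (1 + (?n * theta_ave \<theta> - theta_min \<theta>)) / ?n"
    unfolding theta_min_def by (intro divide_right_mono) auto
  finally show ?thesis .
qed

lemma Ymap_has_derivative:
  assumes C: "row_stochastic C" and \<theta>: "\<And>i. 0 \<le> \<theta> $ i" "\<And>i. \<theta> $ i < 1"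
    and x: "x \<in> cbox 0 1"
  shows "(Ymap C \<theta> has_derivative
           (\<lambda>h. matrix_inv (Mm C \<theta> x)
                  *v ((mat 1 - transpose C) ** diagm \<theta> *v (h * Ymap C \<theta> x))))
         (at x within cbox 0 1)"
proof -
  let ?Q = "(mat 1 - transpose C) ** diagm \<theta>"
  obtain K where K: "\<And>x u. x \<in> cbox 0 1 \<Longrightarrow> norm u \<le> K * norm (Mm C \<theta> x *v u)"
    using Mm_norm_bound[OF C \<theta>] by blast
  have "bilinear (\<lambda>h u. - (?Q *v (h * u)))"
    by (simp add: bilinear_def linear_iff algebra_simps)
  then have bil: "bounded_bilinear (\<lambda>h u. - (?Q *v (h * u)))"
    by (simp add: bilinear_conv_bounded_bilinear)
  have affine: "Mm C \<theta> x' *v u = Mm C \<theta> x *v u + - (?Q *v ((x' - x) * u))" for x x' u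
    by (simp add: Mm_mult_vector algebra_simps)
  show ?thesis
    using matrix_inv_affine_has_derivative[where D = "\<lambda>h u. - (?Q *v (h * u))" and M = "Mm C \<theta>"
        and S = "cbox 0 1" and b = uniform_vec, OF bil affine K x]
    by (simp add: Ymap_def[abs_def] matrix_vector_mult_uminus)
qed

lemma Jac_mult_vector:
  assumes "\<And>i. \<theta> $ i < 1"
  shows "Jac C \<theta> x *v h
           = (mat 1 - diagm \<theta>) *v (matrix_inv (Mm C \<theta> x)
               *v ((mat 1 - transpose C) ** diagm \<theta> *v (h * Ymap C \<theta> x)))"
proof -
  have ne: "1 - \<theta> $ i \<noteq> 0" for i
    using assms[of i] by simp
  have inv: "matrix_inv (mat 1 - diagm \<theta>) = diagm (\<chi> i. 1 / (1 - \<theta> $ i))"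
    using ne by (simp add: mat_1_minus_diagm matrix_inv_diagm)
  have "matrix_inv (mat 1 - diagm \<theta>) *v (diagm (Fmap C \<theta> x) *v h) = h * Ymap C \<theta> x"
    unfolding inv using ne by (simp add: diagm_mult_vector Fmap_component vec_eq_iff field_simps)
  then show ?thesis
    by (simp add: Jac_def Mm_def flip: matrix_vector_mul_assoc)
qed

lemma Fmap_has_derivative:
  assumes "row_stochastic C" "\<And>i. 0 \<le> \<theta> $ i" "\<And>i. \<theta> $ i < 1" and "x \<in> cbox 0 1"
  shows "(Fmap C \<theta> has_derivative (\<lambda>h. Jac C \<theta> x *v h)) (at x within cbox 0 1)"
  unfolding Fmap_eq_Ymap[abs_def] Jac_mult_vector[OF assms(3)]
  by (rule bounded_linear.has_derivative[OF matrix_vector_mul_bounded_linear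
        Ymap_has_derivative[OF assms]])

theorem lemma2:
  fixes C :: "real^'n^'n" and \<theta> :: "real^'n"
  assumes "CARD('n) \<ge> 2"
    and "row_stochastic C"
    and "\<forall>i. C $ i $ i = 0"
    and "\<forall>i. 0 \<le> \<theta> $ i \<and> \<theta> $ i \<le> 1"
    and "\<forall>i. \<theta> $ i < 1"
    and "\<exists>j. 0 < \<theta> $ j"
  shows "(\<forall>x\<in>int_Delta. Fmap C \<theta> differentiable (at x))
       \<and> continuous_on Delta (Fmap C \<theta>)
       \<and> (\<forall>x\<in>int_Delta. (Fmap C \<theta> has_derivative (\<lambda>h. Jac C \<theta> x *v h)) (at x))
       \<and> (\<forall>x\<in>Delta. \<forall>i.
            (1 - \<theta> $ i) / real CARD('n) \<le> Fmap C \<theta> x $ i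
          \<and> Fmap C \<theta> x $ i \<le> (1 + (real CARD('n) * theta_ave \<theta> - theta_min \<theta>)) / real CARD('n))"
proof -
  have hyps: "row_stochastic C" "\<And>i. 0 \<le> \<theta> $ i" "\<And>i. \<theta> $ i < 1"
    using assms by auto
  have deriv: "(Fmap C \<theta> has_derivative (\<lambda>h. Jac C \<theta> x *v h)) (at x)" if "x \<in> int_Delta" for x
  proof -
    have "x \<in> box 0 1"
      using int_Delta_subset_box[OF assms(1)] that by blast
    then show ?thesis
      using Fmap_has_derivative[OF hyps, of x] box_subset_cbox at_within_interior[of x "cbox 0 1"]
      by auto
  qed
  have "continuous_on (cbox 0 1) (Fmap C \<theta>)"
    unfolding continuous_on_eq_continuous_within
    using Fmap_has_derivative[OF hyps] has_derivative_continuous by blast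
  then have cont: "continuous_on Delta (Fmap C \<theta>)"
    using Delta_subset_cbox by (rule continuous_on_subset)
  have bounds: "(1 - \<theta> $ i) / real CARD('n) \<le> Fmap C \<theta> x $ i
      \<and> Fmap C \<theta> x $ i \<le> (1 + (real CARD('n) * theta_ave \<theta> - theta_min \<theta>)) / real CARD('n)"
    if "x \<in> Delta" for x i
    using that Delta_subset_cbox by (intro conjI Fmap_lower[OF hyps] Fmap_upper[OF hyps]) auto
  show ?thesis
    using deriv cont bounds differentiableI by blast
qed

end
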